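(* Let $k\ge 2$ be a natural number and $H$ a graph. Then $H\in\mathcal{H}_k$ if and only if every shortcut tree for $H$ (with respect to any length-function on $T\cup H$) has at most $k$ leaves.
   Context: All graphs are finite; parallel edges are allowed, loops are not. A length-function on a graph $G$ is a map $\ell:E(G)\to\mathbb{R}^+$ (strictly positive reals); $\ell(H)=\sum_{e\in E(H)}\ell(e)$ for subgraphs $H$, which carry the restricted length-function. $\mathrm{sd}_G(A)$ is the minimum of $\ell(S)$ over connected subgraphs $S\subseteq G$ with $A\subseteq V(S)$ ($\infty$ if none). $H\subseteq G$ is $k$-geodesic in $G$ if $\mathrm{sd}_H(A)=\mathrm{sd}_G(A)$ for all $A\subseteq V(H)$ with $|A|\le k$, and fully geodesic if it is $k$-geodesic for all $k$. For $k\ge2$, $\mathcal{H}_k$ is the class of all graphs $H$ such that for every graph $G\supseteq H$ and every length-function on $G$ for which $H$ is $k$-geodesic in $G$, $H$ is fully geodesic in $G$. $L(T)$ is the set of leaves of a tree $T$. Shortcut tree: let $H$ be a graph, $T$ a tree, both subgraphs of $T\cup H$, and $\ell$ a length-function on $T\cup H$. Then $T$ is a shortcut tree for $H$ if (SCT1) $V(T)\cap V(H)=L(T)$; (SCT2) $E(T)\cap E(H)=\emptyset$; (SCT3) $\ell(T)<\mathrm{sd}_H(L(T))$; (SCT4) for every proper subset $B\subsetneq L(T)$, $\mathrm{sd}_H(B)\le\mathrm{sd}_T(B)$. *)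

theory Defs
  imports Complex_Main "HOL-Library.Extended_Real"
begin

text \<open>Finite multigraphs (parallel edges allowed, no loops): a vertex set, an edge set,
  and an incidence map sending each edge to its set of two distinct endpoints.\<close>

record ('v, 'e) mgraph =
  verts :: "'v set"
  edges :: "'e set"
  ends  :: "'e \<Rightarrow> 'v set"

definition wf_graph :: "('v, 'e) mgraph \<Rightarrow> bool" where
  "wf_graph G \<longleftrightarrow> finite (verts G) \<and> finite (edges G) \<and>
     (\<forall>e\<in>edges G. \<exists>u v. u \<noteq> v \<and> u \<in> verts G \<and> v \<in> verts G \<and> ends G e = {u, v})"

definition subgraph :: "('v, 'e) mgraph \<Rightarrow> ('v, 'e) mgraph \<Rightarrow> bool" where
  "subgraph S G \<longleftrightarrow> wf_graph S \<and> verts S \<subseteq> verts G \<and> edges S \<subseteq> edges G \<and>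
     (\<forall>e\<in>edges S. ends S e = ends G e)"

definition adj :: "('v, 'e) mgraph \<Rightarrow> 'v \<Rightarrow> 'v \<Rightarrow> bool" where
  "adj G u v \<longleftrightarrow> (\<exists>e\<in>edges G. ends G e = {u, v})"

definition connected_graph :: "('v, 'e) mgraph \<Rightarrow> bool" where
  "connected_graph G \<longleftrightarrow> (\<forall>u\<in>verts G. \<forall>v\<in>verts G. (adj G)\<^sup>*\<^sup>* u v)"

definition delete_edge :: "('v, 'e) mgraph \<Rightarrow> 'e \<Rightarrow> ('v, 'e) mgraph" where
  "delete_edge G e = G\<lparr>edges := edges G - {e}\<rparr>"

text \<open>Acyclic: no edge lies on a cycle, i.e. the endpoints of an edge are never joined
  after deleting that edge (this also excludes pairs of parallel edges).\<close>
definition acyclic_graph :: "('v, 'e) mgraph \<Rightarrow> bool" where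
  "acyclic_graph G \<longleftrightarrow>
     (\<forall>e\<in>edges G. \<forall>u v. ends G e = {u, v} \<longrightarrow> \<not> (adj (delete_edge G e))\<^sup>*\<^sup>* u v)"

definition is_tree :: "('v, 'e) mgraph \<Rightarrow> bool" where
  "is_tree T \<longleftrightarrow> wf_graph T \<and> verts T \<noteq> {} \<and> connected_graph T \<and> acyclic_graph T"

definition degree :: "('v, 'e) mgraph \<Rightarrow> 'v \<Rightarrow> nat" where
  "degree G v = card {e\<in>edges G. v \<in> ends G e}"

definition leaves :: "('v, 'e) mgraph \<Rightarrow> 'v set" where
  "leaves T = {v\<in>verts T. degree T v = 1}"

definition glen :: "('e \<Rightarrow> real) \<Rightarrow> ('v, 'e) mgraph \<Rightarrow> real" where
  "glen l H = (\<Sum>e\<in>edges H. l e)"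

text \<open>Steiner distance; the infimum of the empty set is \<open>\<infinity>\<close>.\<close>
definition sd :: "('v, 'e) mgraph \<Rightarrow> ('e \<Rightarrow> real) \<Rightarrow> 'v set \<Rightarrow> ereal" where
  "sd G l A = (INF S\<in>{S. subgraph S G \<and> connected_graph S \<and> A \<subseteq> verts S}. ereal (glen l S))"

definition length_fun :: "('v, 'e) mgraph \<Rightarrow> ('e \<Rightarrow> real) \<Rightarrow> bool" where
  "length_fun G l \<longleftrightarrow> (\<forall>e\<in>edges G. 0 < l e)"

definition k_geodesic :: "nat \<Rightarrow> ('v, 'e) mgraph \<Rightarrow> ('v, 'e) mgraph \<Rightarrow> ('e \<Rightarrow> real) \<Rightarrow> bool" where
  "k_geodesic k H G l \<longleftrightarrow> (\<forall>A. A \<subseteq> verts H \<and> card A \<le> k \<longrightarrow> sd H l A = sd G l A)"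

definition fully_geodesic :: "('v, 'e) mgraph \<Rightarrow> ('v, 'e) mgraph \<Rightarrow> ('e \<Rightarrow> real) \<Rightarrow> bool" where
  "fully_geodesic H G l \<longleftrightarrow> (\<forall>A. A \<subseteq> verts H \<longrightarrow> sd H l A = sd G l A)"

text \<open>Membership in the class \<open>\<H>_k\<close> (supergraphs range over graphs on the same vertex/edge types).\<close>
definition in_Hk :: "nat \<Rightarrow> ('v, 'e) mgraph \<Rightarrow> bool" where
  "in_Hk k H \<longleftrightarrow> (\<forall>G l. wf_graph G \<and> subgraph H G \<and> length_fun G l \<and> k_geodesic k H G l
        \<longrightarrow> fully_geodesic H G l)"

definition graph_union :: "('v, 'e) mgraph \<Rightarrow> ('v, 'e) mgraph \<Rightarrow> ('v, 'e) mgraph" where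
  "graph_union T H = \<lparr>verts = verts T \<union> verts H, edges = edges T \<union> edges H,
     ends = (\<lambda>e. if e \<in> edges T then ends T e else ends H e)\<rparr>"

definition shortcut_tree :: "('v, 'e) mgraph \<Rightarrow> ('v, 'e) mgraph \<Rightarrow> ('e \<Rightarrow> real) \<Rightarrow> bool" where
  "shortcut_tree T H l \<longleftrightarrow>
     is_tree T \<and> wf_graph H \<and> length_fun (graph_union T H) l \<and>
     verts T \<inter> verts H = leaves T \<and>
     edges T \<inter> edges H = {} \<and>
     ereal (glen l T) < sd H l (leaves T) \<and>
     (\<forall>B. B \<subset> leaves T \<longrightarrow> sd H l B \<le> sd T l B)"

end

theory Submission
  imports Defs
begin

text \<open>If \<open>T\<close> is a shortcut tree for \<open>H\<close> with more than \<open>k\<close> leaves, then \<open>H\<close> is \<open>k\<close>-geodesic but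
  not fully geodesic in \<open>T \<union> H\<close>. It is not fully geodesic by (SCT3). For a set \<open>A\<close> of at most
  \<open>k\<close> vertices of \<open>H\<close>, any connected subgraph containing \<open>A\<close> can be rerouted into \<open>H\<close>, one
  component of its intersection with \<open>T\<close> at a time, without getting longer: such a component is
  only needed to join fewer than \<open>|L(T)|\<close> leaves of \<open>T\<close>, and by (SCT4) these are joined at least
  as cheaply inside \<open>H\<close>.

  Conversely, if \<open>H\<close> is \<open>k\<close>-geodesic but not fully geodesic in \<open>G\<close>, take a smallest \<open>A\<close> with
  \<open>sd\<^sub>H(A) \<noteq> sd\<^sub>G(A)\<close>, so \<open>|A| > k\<close>. An optimal Steiner subgraph of \<open>A\<close> in \<open>G\<close> is a tree whose
  leaves lie in \<open>A\<close>; a disjoint copy of it, attached to each vertex of \<open>A\<close> by a short pendant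
  edge, is a shortcut tree for \<open>H\<close> with leaf set \<open>A\<close>. The infinite vertex and edge types supply
  the fresh names for this copy.\<close>

lemma adj_sym: "adj G u v \<Longrightarrow> adj G v u"
  unfolding adj_def by (auto simp: insert_commute)

lemma adj_rtranclp_sym: "(adj G)\<^sup>*\<^sup>* u v \<Longrightarrow> (adj G)\<^sup>*\<^sup>* v u"
  by (induction rule: rtranclp_induct)
    (auto intro: converse_rtranclp_into_rtranclp adj_sym)

lemma adj_rtranclp_map:
  assumes "\<And>x y. adj R x y \<Longrightarrow> f x = f y \<or> adj R' (f x) (f y)"
    and "(adj R)\<^sup>*\<^sup>* x y"
  shows "(adj R')\<^sup>*\<^sup>* (f x) (f y)"
  using assms(2)
proof (induction rule: rtranclp_induct)
  case (step y z)
  then show ?case using assms(1)[of y z] by (metis rtranclp.rtrancl_into_rtrancl)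
qed simp

lemma adj_rtranclp_mono:
  assumes "edges R \<subseteq> edges U" "\<And>e. e \<in> edges R \<Longrightarrow> ends R e = ends U e"
    and "(adj R)\<^sup>*\<^sup>* x y"
  shows "(adj U)\<^sup>*\<^sup>* x y"
  using adj_rtranclp_map[of R id U x y] assms unfolding adj_def by auto

lemma adj_rtranclp_stays:
  assumes "(adj U)\<^sup>*\<^sup>* r v" "r \<in> X" "\<And>e. e \<in> edges U \<Longrightarrow> ends U e \<subseteq> X"
  shows "v \<in> X"
  using assms by (induction rule: rtranclp_induct) (auto simp: adj_def)

lemma adj_rtranclp_isolated:
  assumes "(adj U)\<^sup>*\<^sup>* x y" "\<And>e. e \<in> edges U \<Longrightarrow> x \<notin> ends U e"
  shows "y = x"
  using assms by (induction rule: rtranclp_induct) (auto simp: adj_def)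

lemma adj_rtranclp_first_edge:
  "(adj S)\<^sup>*\<^sup>* v w \<Longrightarrow> v \<noteq> w \<Longrightarrow> \<exists>e\<in>edges S. v \<in> ends S e"
  by (induction rule: converse_rtranclp_induct) (auto simp: adj_def)

lemma connected_graph_rtranclp:
  "connected_graph S \<Longrightarrow> u \<in> verts S \<Longrightarrow> v \<in> verts S \<Longrightarrow> (adj S)\<^sup>*\<^sup>* u v"
  unfolding connected_graph_def by auto

lemma connected_graph_from_root:
  assumes "\<And>v. v \<in> verts S \<Longrightarrow> (adj S)\<^sup>*\<^sup>* r v"
  shows "connected_graph S"
  unfolding connected_graph_def using assms by (meson adj_rtranclp_sym rtranclp_trans)

lemma wf_graph_ends_subset: "wf_graph X \<Longrightarrow> e \<in> edges X \<Longrightarrow> ends X e \<subseteq> verts X"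
  unfolding wf_graph_def by fastforce

lemma wf_graph_ends_doubleton:
  "wf_graph X \<Longrightarrow> e \<in> edges X \<Longrightarrow> \<exists>u v. u \<noteq> v \<and> ends X e = {u, v}"
  unfolding wf_graph_def by fastforce

lemma wf_graph_ends_other:
  assumes "wf_graph X" "e \<in> edges X" "x \<in> ends X e"
  obtains y where "y \<noteq> x" "ends X e = {x, y}"
proof -
  obtain u v where "u \<noteq> v" "ends X e = {u, v}" using wf_graph_ends_doubleton[OF assms(1,2)] by blast
  then show ?thesis using that assms(3) by (metis insert_commute insertE singletonD)
qed

lemma wf_graph_adj_verts: "wf_graph U \<Longrightarrow> adj U x y \<Longrightarrow> x \<in> verts U \<and> y \<in> verts U"
  unfolding wf_graph_def adj_def by (metis doubleton_eq_iff)

lemma wf_graph_restrict: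
  assumes "wf_graph S" "F \<subseteq> edges S" "V \<subseteq> verts S"
    and "\<And>e. e \<in> F \<Longrightarrow> ends S e \<subseteq> V"
  shows "wf_graph (S\<lparr>verts := V, edges := F\<rparr>)"
  unfolding wf_graph_def
proof (intro conjI ballI)
  show "finite (verts (S\<lparr>verts := V, edges := F\<rparr>))" "finite (edges (S\<lparr>verts := V, edges := F\<rparr>))"
    using assms(1-3) finite_subset unfolding wf_graph_def by auto
  fix e assume "e \<in> edges (S\<lparr>verts := V, edges := F\<rparr>)"
  then show "\<exists>u v. u \<noteq> v \<and> u \<in> verts (S\<lparr>verts := V, edges := F\<rparr>) \<and> v \<in> verts (S\<lparr>verts := V, edges := F\<rparr>)
      \<and> ends (S\<lparr>verts := V, edges := F\<rparr>) e = {u, v}"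
    using assms(2,4) wf_graph_ends_doubleton[OF assms(1)] by fastforce
qed

lemma subgraphD:
  assumes "subgraph S G"
  shows "wf_graph S" "verts S \<subseteq> verts G" "edges S \<subseteq> edges G"
    "\<And>e. e \<in> edges S \<Longrightarrow> ends S e = ends G e"
  using assms unfolding subgraph_def by auto

lemma subgraph_trans: "subgraph S H \<Longrightarrow> subgraph H G \<Longrightarrow> subgraph S G"
  unfolding subgraph_def by auto

lemma subgraph_restrict:
  assumes "wf_graph S" "F \<subseteq> edges S" "V \<subseteq> verts S"
    and "\<And>e. e \<in> F \<Longrightarrow> ends S e \<subseteq> V"
  shows "subgraph (S\<lparr>verts := V, edges := F\<rparr>) S"
  using wf_graph_restrict[OF assms] assms(2,3) unfolding subgraph_def by auto

lemma subgraph_delete_edge: "wf_graph S \<Longrightarrow> subgraph (delete_edge S e) S"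
  using subgraph_restrict[of S "edges S - {e}" "verts S"] wf_graph_ends_subset[of S]
  unfolding delete_edge_def by auto

lemma graph_union_simps [simp]:
  "verts (graph_union T H) = verts T \<union> verts H"
  "edges (graph_union T H) = edges T \<union> edges H"
  "ends (graph_union T H) e = (if e \<in> edges T then ends T e else ends H e)"
  unfolding graph_union_def by auto

lemma wf_graph_union: "wf_graph T \<Longrightarrow> wf_graph H \<Longrightarrow> wf_graph (graph_union T H)"
  unfolding wf_graph_def by fastforce

lemma subgraph_graph_union:
  "subgraph T G \<Longrightarrow> subgraph H G \<Longrightarrow> subgraph (graph_union T H) G"
  using wf_graph_union unfolding subgraph_def by auto

lemma subgraph_graph_union_left: "wf_graph T \<Longrightarrow> subgraph T (graph_union T H)"
  unfolding subgraph_def by auto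

lemma subgraph_graph_union_right:
  "wf_graph H \<Longrightarrow> edges T \<inter> edges H = {} \<Longrightarrow> subgraph H (graph_union T H)"
  unfolding subgraph_def by auto

definition component :: "('v, 'e) mgraph \<Rightarrow> 'v \<Rightarrow> ('v, 'e) mgraph" where
  "component U r = U\<lparr>verts := {v\<in>verts U. (adj U)\<^sup>*\<^sup>* r v},
     edges := {e\<in>edges U. ends U e \<subseteq> {v\<in>verts U. (adj U)\<^sup>*\<^sup>* r v}}\<rparr>"

lemma subgraph_component: "wf_graph U \<Longrightarrow> subgraph (component U r) U"
  unfolding component_def by (rule subgraph_restrict) auto

lemma verts_component: "verts (component U r) = {v\<in>verts U. (adj U)\<^sup>*\<^sup>* r v}"
  unfolding component_def by simp

lemma edges_component:
  "edges (component U r) = {e\<in>edges U. ends U e \<subseteq> verts (component U r)}"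
  unfolding component_def by simp

lemma ends_component: "ends (component U r) = ends U"
  unfolding component_def by simp

lemma edge_in_component:
  assumes "wf_graph U" "e \<in> edges U" "x \<in> ends U e" "x \<in> verts (component U r)"
  shows "e \<in> edges (component U r)"
proof -
  obtain y where y: "ends U e = {x, y}" using wf_graph_ends_other[OF assms(1-3)] by blast
  have "(adj U)\<^sup>*\<^sup>* r x" using assms(4) unfolding verts_component by blast
  moreover have "adj U x y" unfolding adj_def using assms(2) y by blast
  ultimately have "(adj U)\<^sup>*\<^sup>* r y" by (rule rtranclp.rtrancl_into_rtrancl)
  moreover have "y \<in> verts U" using wf_graph_ends_subset[OF assms(1,2)] y by blast
  ultimately have "y \<in> verts (component U r)" unfolding verts_component by blast
  then show ?thesis unfolding edges_component using assms(2,4) y by simp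
qed

lemma adj_rtranclp_component:
  assumes "wf_graph U" "(adj U)\<^sup>*\<^sup>* r v"
  shows "(adj (component U r))\<^sup>*\<^sup>* r v"
  using assms(2)
proof (induction rule: rtranclp_induct)
  case (step y z)
  from step(2) obtain e where e: "e \<in> edges U" "ends U e = {y, z}" unfolding adj_def by blast
  have "y \<in> verts (component U r)"
    using step(1) wf_graph_adj_verts[OF assms(1) step(2)] unfolding verts_component by blast
  then have "e \<in> edges (component U r)" using edge_in_component[OF assms(1) e(1)] e(2) by blast
  then have "adj (component U r) y z" using e(2) unfolding adj_def ends_component by blast
  then show ?case using step(3) by (rule rtranclp.rtrancl_into_rtrancl[rotated])
qed simp

lemma connected_component:
  assumes "wf_graph U"
  shows "connected_graph (component U r)"
proof (rule connected_graph_from_root)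
  fix v assume "v \<in> verts (component U r)"
  then show "(adj (component U r))\<^sup>*\<^sup>* r v"
    using adj_rtranclp_component[OF assms] unfolding verts_component by blast
qed

lemma subgraph_component_within:
  assumes wfU: "wf_graph U" and wfT: "wf_graph T" and r: "r \<in> verts T"
    and EUT: "edges U \<subseteq> edges T" and ends: "\<And>e. e \<in> edges U \<Longrightarrow> ends U e = ends T e"
  shows "subgraph (component U r) T"
proof -
  have "v \<in> verts T" if "v \<in> verts (component U r)" for v
  proof (rule adj_rtranclp_stays[OF _ r])
    show "(adj U)\<^sup>*\<^sup>* r v" using that unfolding verts_component by blast
    show "ends U e \<subseteq> verts T" if "e \<in> edges U" for e
      using ends[OF that] wf_graph_ends_subset[OF wfT] EUT that by auto
  qed
  then show ?thesis
    using subgraphD[OF subgraph_component[OF wfU, of r]] EUT ends unfolding subgraph_def by auto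
qed

section \<open>Steiner distance\<close>

lemma sd_le_glen:
  "subgraph S G \<Longrightarrow> connected_graph S \<Longrightarrow> A \<subseteq> verts S \<Longrightarrow> sd G l A \<le> ereal (glen l S)"
  unfolding sd_def by (rule INF_lower) auto

lemma sd_greatest:
  "(\<And>S. subgraph S G \<Longrightarrow> connected_graph S \<Longrightarrow> A \<subseteq> verts S \<Longrightarrow> x \<le> ereal (glen l S))
    \<Longrightarrow> x \<le> sd G l A"
  unfolding sd_def by (rule INF_greatest) auto

lemma sd_subgraph_le: "subgraph H G \<Longrightarrow> sd G l A \<le> sd H l A"
  by (rule sd_greatest, rule sd_le_glen) (auto intro: subgraph_trans)

lemma sd_empty_le: "sd G l {} \<le> 0"
proof -
  let ?E = "G\<lparr>verts := {}, edges := {}\<rparr>"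
  have "subgraph ?E G" "connected_graph ?E"
    unfolding subgraph_def wf_graph_def connected_graph_def by auto
  then show ?thesis using sd_le_glen[of ?E G "{}" l] by (simp add: glen_def zero_ereal_def)
qed

lemma sd_cong: "(\<And>e. e \<in> edges G \<Longrightarrow> l e = l' e) \<Longrightarrow> sd G l A = sd G l' A"
  unfolding sd_def glen_def subgraph_def by (intro INF_cong refl) (auto intro!: sum.cong)

text \<open>Only finitely many edge sets exist, so a finite Steiner distance is a minimum.\<close>
lemma sd_attained:
  assumes "wf_graph G" "sd G l A \<noteq> \<infinity>"
  obtains S where "subgraph S G" "connected_graph S" "A \<subseteq> verts S" "sd G l A = ereal (glen l S)"
proof -
  let ?C = "{S. subgraph S G \<and> connected_graph S \<and> A \<subseteq> verts S}"
  let ?V = "(\<lambda>S. ereal (glen l S)) ` ?C"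
  have "?V \<subseteq> (\<lambda>F. ereal (sum l F)) ` Pow (edges G)"
    unfolding glen_def subgraph_def by auto
  moreover have "finite (edges G)" using assms(1) unfolding wf_graph_def by auto
  ultimately have fin: "finite ?V" by (meson finite_Pow_iff finite_imageI finite_subset)
  have "?V \<noteq> {}"
  proof
    assume "?V = {}"
    then have "sd G l A = Inf {}" unfolding sd_def by (simp only:)
    then have "sd G l A = \<infinity>" by (simp add: top_ereal_def)
    then show False using assms(2) by simp
  qed
  then have "Inf ?V \<in> ?V" using Min_in[OF fin] Min_Inf[OF fin] by simp
  then obtain S where S: "S \<in> ?C" "Inf ?V = ereal (glen l S)" by auto
  have "sd G l A = Inf ?V" unfolding sd_def by (rule refl)
  then show ?thesis using S by (intro that) auto
qed

lemma glen_nonneg: "length_fun G l \<Longrightarrow> edges S \<subseteq> edges G \<Longrightarrow> 0 \<le> glen l S"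
  unfolding glen_def length_fun_def by (intro sum_nonneg) (auto intro: less_imp_le)

lemma glen_mono:
  "edges S \<subseteq> edges S' \<Longrightarrow> finite (edges S') \<Longrightarrow> (\<And>e. e \<in> edges S' \<Longrightarrow> 0 \<le> l e)
    \<Longrightarrow> glen l S \<le> glen l S'"
  unfolding glen_def by (rule sum_mono2) auto

lemma glen_graph_union_le:
  assumes "finite (edges T)" "finite (edges H)" "\<And>e. e \<in> edges T \<Longrightarrow> 0 \<le> l e"
  shows "glen l (graph_union T H) \<le> glen l T + glen l H"
proof -
  have "0 \<le> sum l (edges T \<inter> edges H)" using assms(3) by (intro sum_nonneg) auto
  then show ?thesis unfolding glen_def using sum_Un[OF assms(1,2), of l] by simp
qed

lemma connected_subgraph_via:
  assumes subP: "subgraph P G" and subX: "subgraph X G" and conX: "connected_graph X"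
    and AP: "A \<subseteq> verts P" and a0: "a0 \<in> A"
    and reach: "\<forall>a\<in>A. \<exists>b\<in>verts X. (adj P)\<^sup>*\<^sup>* a b"
    and lf: "length_fun G l"
  shows "subgraph (component (graph_union P X) a0) G"
    and "connected_graph (component (graph_union P X) a0)"
    and "A \<subseteq> verts (component (graph_union P X) a0)"
    and "edges (component (graph_union P X) a0) \<subseteq> edges P \<union> edges X"
    and "glen l (component (graph_union P X) a0) \<le> glen l P + glen l X"
proof -
  let ?U = "graph_union P X"
  let ?S = "component ?U a0"
  have wfU: "wf_graph ?U" using wf_graph_union subgraphD(1)[OF subP] subgraphD(1)[OF subX] .
  have PU: "(adj ?U)\<^sup>*\<^sup>* x y" if "(adj P)\<^sup>*\<^sup>* x y" for x y
    using adj_rtranclp_mono[OF _ _ that] by simp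
  have XU: "(adj ?U)\<^sup>*\<^sup>* x y" if "(adj X)\<^sup>*\<^sup>* x y" for x y
    using adj_rtranclp_mono[OF _ _ that] subgraphD(4)[OF subP] subgraphD(4)[OF subX] by simp
  have to_X: "\<exists>b\<in>verts X. (adj ?U)\<^sup>*\<^sup>* a b" if a: "a \<in> A" for a
  proof -
    obtain b where b: "b \<in> verts X" "(adj P)\<^sup>*\<^sup>* a b" using reach a by blast
    show ?thesis using b(1) PU[OF b(2)] by blast
  qed
  have "(adj ?U)\<^sup>*\<^sup>* a0 a" if a: "a \<in> A" for a
  proof -
    obtain b0 where b0: "b0 \<in> verts X" "(adj ?U)\<^sup>*\<^sup>* a0 b0" using to_X a0 by blast
    obtain b where b: "b \<in> verts X" "(adj ?U)\<^sup>*\<^sup>* a b" using to_X a by blast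
    have "(adj ?U)\<^sup>*\<^sup>* b0 b" using XU connected_graph_rtranclp[OF conX b0(1) b(1)] .
    then show ?thesis by (rule rtranclp_trans[OF rtranclp_trans[OF b0(2)] adj_rtranclp_sym[OF b(2)]])
  qed
  then show "A \<subseteq> verts ?S" using AP unfolding verts_component graph_union_simps by blast
  show "subgraph ?S G"
    by (rule subgraph_trans[OF subgraph_component[OF wfU] subgraph_graph_union[OF subP subX]])
  show "connected_graph ?S" by (rule connected_component[OF wfU])
  show ES: "edges ?S \<subseteq> edges P \<union> edges X"
    using subgraphD(3)[OF subgraph_component[OF wfU]] by simp
  have finE: "finite (edges P)" "finite (edges X)"
    using subgraphD(1)[OF subP] subgraphD(1)[OF subX] unfolding wf_graph_def by auto
  have nonneg: "0 \<le> l e" if "e \<in> edges P \<union> edges X" for e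
    using that lf subgraphD(3)[OF subP] subgraphD(3)[OF subX] unfolding length_fun_def
    by (auto intro: less_imp_le)
  have "glen l ?S \<le> glen l ?U"
    using ES finE nonneg by (intro glen_mono) auto
  also have "\<dots> \<le> glen l P + glen l X"
    using finE nonneg by (intro glen_graph_union_le) auto
  finally show "glen l ?S \<le> glen l P + glen l X" .
qed

section \<open>Rerouting through a shortcut tree\<close>

lemma adj_rtranclp_enter:
  assumes "(adj S)\<^sup>*\<^sup>* a u" "u \<in> K" "a \<in> W"
    and inside: "\<And>f. f \<in> F \<Longrightarrow> ends S f \<subseteq> K"
    and boundary: "\<And>f x. f \<in> edges S \<Longrightarrow> f \<notin> F \<Longrightarrow> x \<in> ends S f \<Longrightarrow> x \<in> K \<Longrightarrow> x \<in> W"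
  shows "\<exists>b\<in>K \<inter> W. (adj (S\<lparr>edges := edges S - F\<rparr>))\<^sup>*\<^sup>* a b"
proof -
  let ?R = "adj (S\<lparr>edges := edges S - F\<rparr>)"
  have "(\<exists>b\<in>K \<inter> W. ?R\<^sup>*\<^sup>* a b) \<or> (?R\<^sup>*\<^sup>* a u \<and> u \<notin> K)"
    using assms(1)
  proof (induction rule: rtranclp_induct)
    case base
    then show ?case using assms(3) by auto
  next
    case (step y z)
    show ?case
    proof (cases "\<exists>b\<in>K \<inter> W. ?R\<^sup>*\<^sup>* a b")
      case False
      then have ry: "?R\<^sup>*\<^sup>* a y" "y \<notin> K" using step.IH by auto
      obtain g where g: "g \<in> edges S" "ends S g = {y, z}" using step.hyps(2) unfolding adj_def by auto
      have "g \<notin> F" using inside ry(2) g(2) by blast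
      then have "?R y z" using g unfolding adj_def by auto
      then have rz: "?R\<^sup>*\<^sup>* a z" using ry(1) by (rule rtranclp.rtrancl_into_rtrancl[rotated])
      have "z \<in> W" if "z \<in> K" using boundary[OF g(1) \<open>g \<notin> F\<close> _ that] g(2) by simp
      then show ?thesis using rz by auto
    qed simp
  qed
  then show ?thesis using assms(2) by auto
qed

lemma subgraph_union_avoiding_left:
  assumes subS: "subgraph S (graph_union T H)" and conS: "connected_graph S"
    and wfH: "wf_graph H" and ET: "edges S \<inter> edges T = {}" and ETH: "edges T \<inter> edges H = {}"
    and a: "a \<in> verts S \<inter> verts H"
  shows "subgraph S H"
proof -
  have EH: "edges S \<subseteq> edges H" using subgraphD(3)[OF subS] ET by auto
  have ends: "ends S e = ends H e" if "e \<in> edges S" for e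
    using subgraphD(4)[OF subS that] that EH ETH by auto
  have "v \<in> verts H" if v: "v \<in> verts S" for v
  proof (cases "v = a")
    case False
    obtain e where "e \<in> edges S" "v \<in> ends S e"
      using adj_rtranclp_first_edge[OF connected_graph_rtranclp[OF conS v] False] a by blast
    then show ?thesis using ends EH wf_graph_ends_subset[OF wfH] by blast
  qed (use a in simp)
  then show ?thesis
    unfolding subgraph_def using subgraphD(1)[OF subS] EH ends by auto
qed

lemma graph_union_left_component:
  assumes subS: "subgraph S (graph_union T H)" and wfT: "wf_graph T" and wfH: "wf_graph H"
    and e0: "e0 \<in> edges S" "e0 \<in> edges T"
  obtains C where "subgraph C S" "subgraph C T" "connected_graph C" "e0 \<in> edges C"
    "\<forall>f\<in>edges S - edges C. ends S f \<inter> verts C \<subseteq> verts H"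
proof -
  have wfS: "wf_graph S" and ESG: "edges S \<subseteq> edges T \<union> edges H"
    using subgraphD[OF subS] by auto
  have endsS: "ends S e = (if e \<in> edges T then ends T e else ends H e)" if "e \<in> edges S" for e
    using subgraphD(4)[OF subS that] by simp
  define ST where "ST = S\<lparr>edges := edges S \<inter> edges T\<rparr>"
  have subST: "subgraph ST S"
    using subgraph_restrict[OF wfS, of "edges S \<inter> edges T" "verts S"] wf_graph_ends_subset[OF wfS]
    unfolding ST_def by auto
  have wfST: "wf_graph ST" using subgraphD(1)[OF subST] .
  obtain u0 where u0: "u0 \<in> ends S e0" using wf_graph_ends_doubleton[OF wfS e0(1)] by blast
  define C where "C = component ST u0"
  have subCS: "subgraph C S" unfolding C_def by (rule subgraph_trans[OF subgraph_component[OF wfST] subST])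
  have u0C: "u0 \<in> verts C"
    using u0 wf_graph_ends_subset[OF wfS e0(1)] unfolding C_def verts_component ST_def by auto
  show ?thesis
  proof (rule that)
    show "subgraph C S" "connected_graph C"
      using subCS connected_component[OF wfST] unfolding C_def by auto
    show "subgraph C T"
      unfolding C_def
    proof (rule subgraph_component_within[OF wfST wfT])
      show "u0 \<in> verts T" using u0 endsS[OF e0(1)] e0(2) wf_graph_ends_subset[OF wfT e0(2)] by auto
      show "ends ST f = ends T f" if "f \<in> edges ST" for f using that endsS unfolding ST_def by auto
    qed (auto simp: ST_def)
    show "\<forall>f\<in>edges S - edges C. ends S f \<inter> verts C \<subseteq> verts H"
    proof (intro ballI subsetI)
      fix f x assume "f \<in> edges S - edges C" "x \<in> ends S f \<inter> verts C"
      then have f: "f \<in> edges S" "f \<notin> edges C" "x \<in> ends S f" "x \<in> verts C" by auto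
      show "x \<in> verts H"
      proof (cases "f \<in> edges T")
        case True
        then have "f \<in> edges C"
          using edge_in_component[OF wfST, of f x u0] f unfolding C_def ST_def by auto
        then show ?thesis using f(2) by simp
      next
        case False
        then have "f \<in> edges H" using f(1) ESG by auto
        then show ?thesis using f(1,3) endsS[OF f(1)] False wf_graph_ends_subset[OF wfH] by auto
      qed
    qed
    show "e0 \<in> edges C"
      using edge_in_component[OF wfST _ _ u0C[unfolded C_def]] e0 u0 unfolding C_def ST_def by auto
  qed
qed

lemma subgraph_cut_part:
  assumes wfS: "wf_graph S" and subCS: "subgraph C S" and conS: "connected_graph S"
    and u0: "u0 \<in> verts C"
    and boundary: "\<forall>f\<in>edges S - edges C. ends S f \<inter> verts C \<subseteq> W"
    and AS: "A \<subseteq> verts S" and AW: "A \<subseteq> W"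
  obtains P where "subgraph P S" "edges P = edges S - edges C" "A \<subseteq> verts P"
    "\<forall>a\<in>A. \<exists>b\<in>verts C \<inter> W. (adj P)\<^sup>*\<^sup>* a b"
proof -
  define P where "P = S\<lparr>verts := verts S - (verts C - W), edges := edges S - edges C\<rparr>"
  show ?thesis
  proof (rule that)
    show "subgraph P S"
      unfolding P_def
    proof (rule subgraph_restrict[OF wfS])
      show "ends S f \<subseteq> verts S - (verts C - W)" if "f \<in> edges S - edges C" for f
        using that boundary wf_graph_ends_subset[OF wfS] by blast
    qed auto
    show "\<forall>a\<in>A. \<exists>b\<in>verts C \<inter> W. (adj P)\<^sup>*\<^sup>* a b"
    proof
      fix a assume a: "a \<in> A"
      have "\<exists>b\<in>verts C \<inter> W. (adj (S\<lparr>edges := edges S - edges C\<rparr>))\<^sup>*\<^sup>* a b"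
      proof (rule adj_rtranclp_enter[OF _ u0])
        show "(adj S)\<^sup>*\<^sup>* a u0"
          using connected_graph_rtranclp[OF conS] a AS subgraphD(2)[OF subCS] u0 by blast
        show "ends S f \<subseteq> verts C" if "f \<in> edges C" for f
          using that wf_graph_ends_subset[OF subgraphD(1)[OF subCS]] subgraphD(4)[OF subCS] by metis
        show "a \<in> W" using a AW by blast
      qed (use boundary in blast)
      moreover have "adj (S\<lparr>edges := edges S - edges C\<rparr>) = adj P" unfolding P_def adj_def by simp
      ultimately show "\<exists>b\<in>verts C \<inter> W. (adj P)\<^sup>*\<^sup>* a b" by simp
    qed
    show "edges P = edges S - edges C" "A \<subseteq> verts P" using AS AW unfolding P_def by auto
  qed
qed

text \<open>The part of \<open>S\<close> inside \<open>T\<close> around a tree edge meets \<open>H\<close> only in leaves of \<open>T\<close>, and fewer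
  than \<open>|L(T)|\<close> of them are needed to reconnect the terminals, so by (SCT4) it can be replaced
  by a subgraph of \<open>H\<close> that is no longer.\<close>
lemma shortcut_tree_exchange:
  assumes st: "shortcut_tree T H l"
    and subS: "subgraph S (graph_union T H)" and conS: "connected_graph S"
    and AS: "A \<subseteq> verts S" and AH: "A \<subseteq> verts H" and a0: "a0 \<in> A"
    and cardA: "card A < card (leaves T)"
    and e0: "e0 \<in> edges S" "e0 \<in> edges T"
  obtains S' where "subgraph S' (graph_union T H)" "connected_graph S'" "A \<subseteq> verts S'"
    "edges S' \<inter> edges T \<subseteq> edges S \<inter> edges T - {e0}" "glen l S' \<le> glen l S"
proof -
  let ?G = "graph_union T H"
  have wfT: "wf_graph T" and wfH: "wf_graph H" and lf: "length_fun ?G l"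
    and VTH: "verts T \<inter> verts H = leaves T" and ETH: "edges T \<inter> edges H = {}"
    and sct4: "\<And>B. B \<subset> leaves T \<Longrightarrow> sd H l B \<le> sd T l B"
    using st unfolding shortcut_tree_def is_tree_def by auto
  obtain C where subCS: "subgraph C S" and subCT: "subgraph C T" and conC: "connected_graph C"
    and e0C: "e0 \<in> edges C"
    and boundary: "\<forall>f\<in>edges S - edges C. ends S f \<inter> verts C \<subseteq> verts H"
    using graph_union_left_component[OF subS wfT wfH e0] by blast
  obtain u0 where "u0 \<in> ends C e0" using wf_graph_ends_doubleton[OF subgraphD(1)[OF subCS] e0C] by blast
  then have "u0 \<in> verts C" using wf_graph_ends_subset[OF subgraphD(1)[OF subCS] e0C] by blast
  then obtain P where subPS: "subgraph P S" and EP: "edges P = edges S - edges C" and AP: "A \<subseteq> verts P"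
    and rep_ex: "\<forall>a\<in>A. \<exists>b\<in>verts C \<inter> verts H. (adj P)\<^sup>*\<^sup>* a b"
    using subgraph_cut_part[OF subgraphD(1)[OF subS] subCS conS _ boundary AS AH] by blast
  define rep where "rep a = (SOME b. b \<in> verts C \<inter> verts H \<and> (adj P)\<^sup>*\<^sup>* a b)" for a
  have rep: "rep a \<in> verts C \<inter> verts H" "(adj P)\<^sup>*\<^sup>* a (rep a)" if "a \<in> A" for a
  proof -
    have "\<exists>b. b \<in> verts C \<inter> verts H \<and> (adj P)\<^sup>*\<^sup>* a b" using rep_ex that by blast
    from someI_ex[OF this] show "rep a \<in> verts C \<inter> verts H" "(adj P)\<^sup>*\<^sup>* a (rep a)"
      unfolding rep_def by auto
  qed
  have finA: "finite A" using AH wfH finite_subset unfolding wf_graph_def by auto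
  have "rep ` A \<subseteq> verts T \<inter> verts H" using rep(1) subgraphD(2)[OF subCT] by blast
  then have "rep ` A \<subseteq> leaves T" using VTH by simp
  moreover have "card (rep ` A) < card (leaves T)" using card_image_le[OF finA, of rep] cardA by linarith
  ultimately have "sd H l (rep ` A) \<le> sd T l (rep ` A)" by (intro sct4) auto
  also have "\<dots> \<le> ereal (glen l C)" by (rule sd_le_glen[OF subCT conC]) (use rep(1) in blast)
  finally have sd_rep: "sd H l (rep ` A) \<le> ereal (glen l C)" .
  then have "sd H l (rep ` A) \<noteq> \<infinity>" by auto
  then obtain X where subXH: "subgraph X H" and conX: "connected_graph X"
    and repX: "rep ` A \<subseteq> verts X" and glenX: "sd H l (rep ` A) = ereal (glen l X)"
    by (rule sd_attained[OF wfH])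
  have subXG: "subgraph X ?G" using subgraph_trans[OF subXH subgraph_graph_union_right[OF wfH ETH]] .
  have reachX: "\<forall>a\<in>A. \<exists>b\<in>verts X. (adj P)\<^sup>*\<^sup>* a b" using rep(2) repX by blast
  let ?S' = "component (graph_union P X) a0"
  note S' = connected_subgraph_via[OF subgraph_trans[OF subPS subS] subXG conX AP a0 reachX lf]
  show ?thesis
  proof (rule that)
    show "subgraph ?S' ?G" "connected_graph ?S'" "A \<subseteq> verts ?S'" using S'(1-3) .
    show "edges ?S' \<inter> edges T \<subseteq> edges S \<inter> edges T - {e0}"
      using S'(4) subgraphD(3)[OF subXH] ETH e0C EP by auto
    have "glen l ?S' \<le> glen l P + glen l X" using S'(5) .
    also have "\<dots> \<le> glen l P + glen l C" using sd_rep glenX by simp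
    also have "\<dots> = glen l S"
      using sum.subset_diff[OF subgraphD(3)[OF subCS], of l] subgraphD(1)[OF subS] EP
      unfolding glen_def wf_graph_def by simp
    finally show "glen l ?S' \<le> glen l S" .
  qed
qed

lemma shortcut_tree_sd_le:
  assumes st: "shortcut_tree T H l" and cardA: "card A < card (leaves T)" and AH: "A \<subseteq> verts H"
  shows "sd H l A \<le> sd (graph_union T H) l A"
proof (rule sd_greatest)
  fix S assume "subgraph S (graph_union T H)" "connected_graph S" "A \<subseteq> verts S"
  then show "sd H l A \<le> ereal (glen l S)"
  proof (induction "card (edges S \<inter> edges T)" arbitrary: S rule: less_induct)
    case (less S)
    have wfH: "wf_graph H" and lf: "length_fun (graph_union T H) l" and ETH: "edges T \<inter> edges H = {}"
      using st unfolding shortcut_tree_def by auto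
    show ?case
    proof (cases "A = {}")
      case True
      then show ?thesis
        using sd_empty_le[of H l] glen_nonneg[OF lf subgraphD(3)[OF less.prems(1)]]
        by (simp add: order_trans zero_ereal_def)
    next
      case False
      then obtain a0 where a0: "a0 \<in> A" by blast
      show ?thesis
      proof (cases "edges S \<inter> edges T = {}")
        case True
        then have "subgraph S H"
          using subgraph_union_avoiding_left[OF less.prems(1,2) wfH _ ETH] a0 less.prems(3) AH by blast
        then show ?thesis using sd_le_glen less.prems(2,3) by blast
      next
        case False
        then obtain e0 where "e0 \<in> edges S" "e0 \<in> edges T" by blast
        then obtain S' where S': "subgraph S' (graph_union T H)" "connected_graph S'" "A \<subseteq> verts S'"
          and fewer: "edges S' \<inter> edges T \<subseteq> edges S \<inter> edges T - {e0}" and shorter: "glen l S' \<le> glen l S"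
          using shortcut_tree_exchange[OF st less.prems AH a0 cardA] by blast
        have "finite (edges S)" using subgraphD(1)[OF less.prems(1)] unfolding wf_graph_def by blast
        moreover have "edges S' \<inter> edges T \<subset> edges S \<inter> edges T"
          using fewer \<open>e0 \<in> edges S\<close> \<open>e0 \<in> edges T\<close> by blast
        ultimately have "card (edges S' \<inter> edges T) < card (edges S \<inter> edges T)"
          by (intro psubset_card_mono) auto
        then have "sd H l A \<le> ereal (glen l S')" by (rule less.hyps[OF _ S'])
        then show ?thesis using shorter by (meson ereal_less_eq(3) order_trans)
      qed
    qed
  qed
qed

lemma shortcut_tree_card_leaves_le:
  assumes Hk: "in_Hk k H" and st: "shortcut_tree T H l"
  shows "card (leaves T) \<le> k"
proof (rule ccontr)
  assume "\<not> card (leaves T) \<le> k"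
  then have kL: "k < card (leaves T)" by simp
  let ?G = "graph_union T H"
  have wfT: "wf_graph T" and wfH: "wf_graph H" and lf: "length_fun ?G l" and conT: "connected_graph T"
    and VTH: "verts T \<inter> verts H = leaves T" and ETH: "edges T \<inter> edges H = {}"
    and sct3: "ereal (glen l T) < sd H l (leaves T)"
    using st unfolding shortcut_tree_def is_tree_def by auto
  have subH: "subgraph H ?G" by (rule subgraph_graph_union_right[OF wfH ETH])
  have "k_geodesic k H ?G l"
    unfolding k_geodesic_def
  proof (intro allI impI)
    fix A assume A: "A \<subseteq> verts H \<and> card A \<le> k"
    then have "card A < card (leaves T)" using kL by linarith
    then have "sd H l A \<le> sd ?G l A" using shortcut_tree_sd_le[OF st] A by blast
    then show "sd H l A = sd ?G l A" using sd_subgraph_le[OF subH] by (simp add: order_antisym)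
  qed
  then have "fully_geodesic H ?G l"
    using Hk wf_graph_union[OF wfT wfH] subH lf unfolding in_Hk_def by auto
  then have "sd H l (leaves T) = sd ?G l (leaves T)" using VTH unfolding fully_geodesic_def by auto
  also have "\<dots> \<le> ereal (glen l T)"
    using sd_le_glen[OF subgraph_graph_union_left[OF wfT] conT] unfolding leaves_def by auto
  finally show False using sct3 by simp
qed

section \<open>Optimal Steiner subgraphs\<close>

lemma adj_rtranclp_delete_edge:
  assumes "ends S e = {u, v}" "(adj (delete_edge S e))\<^sup>*\<^sup>* u v" "(adj S)\<^sup>*\<^sup>* x y"
  shows "(adj (delete_edge S e))\<^sup>*\<^sup>* x y"
  using assms(3)
proof (induction rule: rtranclp_induct)
  case (step y z)
  from step.hyps(2) obtain f where f: "f \<in> edges S" "ends S f = {y, z}" unfolding adj_def by blast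
  have "(adj (delete_edge S e))\<^sup>*\<^sup>* y z"
  proof (cases "f = e")
    case True
    then have "(y = u \<and> z = v) \<or> (y = v \<and> z = u)" using f assms(1) by (auto simp: doubleton_eq_iff)
    then show ?thesis using assms(2) adj_rtranclp_sym by metis
  next
    case False
    then have "adj (delete_edge S e) y z" using f unfolding adj_def delete_edge_def by auto
    then show ?thesis by simp
  qed
  then show ?case using step.IH by (rule rtranclp_trans[rotated])
qed simp

lemma adj_rtranclp_delete_leaf:
  assumes wf: "wf_graph S" and e: "e \<in> edges S" "ends S e = {v, w}"
    and leaf: "\<And>f. f \<in> edges S \<Longrightarrow> v \<in> ends S f \<Longrightarrow> f = e"
    and r: "(adj S)\<^sup>*\<^sup>* x y" and "x \<noteq> v" "y \<noteq> v"
  shows "(adj (S\<lparr>verts := verts S - {v}, edges := edges S - {e}\<rparr>))\<^sup>*\<^sup>* x y"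
proof -
  let ?R = "adj (S\<lparr>verts := verts S - {v}, edges := edges S - {e}\<rparr>)"
  have "?R\<^sup>*\<^sup>* x (if y = v then w else y)"
    using r
  proof (induction rule: rtranclp_induct)
    case base
    then show ?case using \<open>x \<noteq> v\<close> by simp
  next
    case (step y z)
    obtain f where f: "f \<in> edges S" "ends S f = {y, z}" using step.hyps(2) unfolding adj_def by auto
    have yz: "y \<noteq> z" using wf_graph_ends_doubleton[OF wf f(1)] f(2) by (auto simp: doubleton_eq_iff)
    show ?case
    proof (cases "y = v \<or> z = v")
      case True
      then have "f = e" using leaf f by auto
      then have "(y = v \<and> z = w) \<or> (y = w \<and> z = v)" using f(2) e(2) yz by (auto simp: doubleton_eq_iff)
      then show ?thesis using step.IH by auto
    next
      case False
      then have "f \<noteq> e" using e(2) f(2) by auto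
      then have "?R y z" using f unfolding adj_def by auto
      then show ?thesis using step.IH False by auto
    qed
  qed
  then show ?thesis using \<open>y \<noteq> v\<close> by simp
qed

lemma degree_pos:
  assumes "connected_graph S" "finite (edges S)" "v \<in> verts S" "w \<in> verts S" "v \<noteq> w"
  shows "degree S v \<noteq> 0"
proof -
  obtain e where "e \<in> edges S" "v \<in> ends S e"
    using adj_rtranclp_first_edge[OF connected_graph_rtranclp[OF assms(1,3,4)] assms(5)] by blast
  then show ?thesis using assms(2) unfolding degree_def by auto
qed

lemma sd_optimal_edge_essential:
  assumes opt: "sd G l A = ereal (glen l S)" and lf: "length_fun G l" and subS: "subgraph S G"
    and e: "e \<in> edges S"
    and S': "subgraph S' G" "connected_graph S'" "A \<subseteq> verts S'" "edges S' \<subseteq> edges S - {e}"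
  shows False
proof -
  have finS: "finite (edges S)" using subgraphD(1)[OF subS] unfolding wf_graph_def by blast
  have pos: "0 < l f" if "f \<in> edges S" for f
    using lf subgraphD(3)[OF subS] that unfolding length_fun_def by blast
  have "glen l S' \<le> sum l (edges S - {e})"
    unfolding glen_def using S'(4) finS pos by (intro sum_mono2) (auto intro: less_imp_le)
  also have "\<dots> < glen l S" unfolding glen_def using sum.remove[OF finS e, of l] pos[OF e] by simp
  finally have "glen l S' < glen l S" .
  moreover have "sd G l A \<le> ereal (glen l S')" by (rule sd_le_glen[OF S'(1-3)])
  ultimately show False using opt by simp
qed

lemma sd_optimal_acyclic:
  assumes opt: "sd G l A = ereal (glen l S)" and lf: "length_fun G l" and subS: "subgraph S G"
    and conS: "connected_graph S" and AS: "A \<subseteq> verts S"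
  shows "acyclic_graph S"
  unfolding acyclic_graph_def
proof (intro ballI allI impI notI)
  fix e u v assume e: "e \<in> edges S" and uv: "ends S e = {u, v}"
    and cycle: "(adj (delete_edge S e))\<^sup>*\<^sup>* u v"
  have "subgraph (delete_edge S e) G"
    using subgraph_trans[OF subgraph_delete_edge[OF subgraphD(1)[OF subS]] subS] .
  moreover have "connected_graph (delete_edge S e)"
    using conS adj_rtranclp_delete_edge[OF uv cycle] unfolding connected_graph_def delete_edge_def by auto
  ultimately show False
    by (rule sd_optimal_edge_essential[OF opt lf subS e]) (use AS in \<open>auto simp: delete_edge_def\<close>)
qed

lemma sd_optimal_leaves:
  assumes opt: "sd G l A = ereal (glen l S)" and lf: "length_fun G l" and subS: "subgraph S G"
    and conS: "connected_graph S" and AS: "A \<subseteq> verts S"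
    and v: "v \<in> verts S" "v \<notin> A"
  shows "degree S v \<noteq> 1"
proof
  assume "degree S v = 1"
  then obtain e where eset: "{f \<in> edges S. v \<in> ends S f} = {e}"
    unfolding degree_def by (meson card_1_singletonE)
  then have e: "e \<in> edges S" "v \<in> ends S e" by auto
  have leaf: "\<And>f. f \<in> edges S \<Longrightarrow> v \<in> ends S f \<Longrightarrow> f = e" using eset by auto
  have wfS: "wf_graph S" using subgraphD(1)[OF subS] .
  obtain w where w: "ends S e = {v, w}" using wf_graph_ends_other[OF wfS e] by blast
  let ?S = "S\<lparr>verts := verts S - {v}, edges := edges S - {e}\<rparr>"
  have "subgraph ?S S"
  proof (rule subgraph_restrict[OF wfS])
    show "ends S f \<subseteq> verts S - {v}" if "f \<in> edges S - {e}" for f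
      using that leaf wf_graph_ends_subset[OF wfS] by blast
  qed auto
  then have "subgraph ?S G" using subS by (rule subgraph_trans)
  moreover have "connected_graph ?S"
    unfolding connected_graph_def
    using adj_rtranclp_delete_leaf[OF wfS e(1) w leaf] connected_graph_rtranclp[OF conS] by auto
  moreover have "A \<subseteq> verts ?S" using AS v by auto
  ultimately show False by (rule sd_optimal_edge_essential[OF opt lf subS e(1)]) auto
qed

section \<open>Pendant copies\<close>

text \<open>The shortcut tree of the backward direction: a disjoint copy of \<open>S\<close> (vertices renamed by
  \<open>cv\<close>, edges by \<open>ce\<close>) together with a pendant edge \<open>pe a\<close> from every \<open>a \<in> A\<close> to its copy \<open>cv a\<close>.\<close>
locale pendant_copy =
  fixes S :: "('v, 'e) mgraph" and A :: "'v set"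
    and cv :: "'v \<Rightarrow> 'v" and ce :: "'e \<Rightarrow> 'e" and pe :: "'v \<Rightarrow> 'e"
  assumes wf_S: "wf_graph S" and A_verts: "A \<subseteq> verts S"
    and inj_cv: "inj_on cv (verts S)" and cv_notin_A: "cv ` verts S \<inter> A = {}"
    and inj_ce: "inj_on ce (edges S)" and inj_pe: "inj_on pe A"
    and ce_pe_disjoint: "ce ` edges S \<inter> pe ` A = {}"
begin

definition copy_graph :: "('v, 'e) mgraph" where
  "copy_graph = \<lparr>verts = cv ` verts S \<union> A, edges = ce ` edges S \<union> pe ` A,
     ends = (\<lambda>x. if x \<in> ce ` edges S then cv ` ends S (the_inv_into (edges S) ce x)
                 else {the_inv_into A pe x, cv (the_inv_into A pe x)})\<rparr>"

definition proj :: "'v \<Rightarrow> 'v" where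
  "proj x = (if x \<in> cv ` verts S then the_inv_into (verts S) cv x else x)"

lemma verts_copy_graph: "verts copy_graph = cv ` verts S \<union> A"
  and edges_copy_graph: "edges copy_graph = ce ` edges S \<union> pe ` A"
  unfolding copy_graph_def by simp_all

lemma ends_copy_graph_ce: "e \<in> edges S \<Longrightarrow> ends copy_graph (ce e) = cv ` ends S e"
  unfolding copy_graph_def using the_inv_into_f_f[OF inj_ce] by auto

lemma ends_copy_graph_pe: "a \<in> A \<Longrightarrow> ends copy_graph (pe a) = {a, cv a}"
  unfolding copy_graph_def using the_inv_into_f_f[OF inj_pe] ce_pe_disjoint by auto

lemma copy_graph_edgeE:
  assumes "x \<in> edges copy_graph"
  obtains (copy) e where "e \<in> edges S" "x = ce e" | (pendant) a where "a \<in> A" "x = pe a"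
  using assms unfolding edges_copy_graph by blast

lemma proj_cv: "v \<in> verts S \<Longrightarrow> proj (cv v) = v"
  unfolding proj_def using the_inv_into_f_f[OF inj_cv] by auto

lemma proj_A: "a \<in> A \<Longrightarrow> proj a = a"
  unfolding proj_def using cv_notin_A by auto

lemma proj_verts: "x \<in> verts copy_graph \<Longrightarrow> proj x \<in> verts S"
  unfolding verts_copy_graph using proj_cv proj_A A_verts by auto

lemma cv_ne_A: "v \<in> verts S \<Longrightarrow> a \<in> A \<Longrightarrow> cv v \<noteq> a"
  using cv_notin_A by blast

lemma ends_copy_graph_ce_proj:
  assumes "e \<in> edges S" "ends copy_graph (ce e) = {x, y}"
  shows "ends S e = {proj x, proj y}"
proof -
  obtain p q where pq: "ends S e = {p, q}" "p \<in> verts S" "q \<in> verts S"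
    using wf_S assms(1) unfolding wf_graph_def by blast
  then have "{cv p, cv q} = {x, y}" using assms ends_copy_graph_ce by simp
  then show ?thesis using pq proj_cv by (auto simp: doubleton_eq_iff)
qed

lemma edge_at_A:
  assumes "a \<in> A" "x \<in> edges copy_graph" "a \<in> ends copy_graph x"
  shows "x = pe a"
  using assms(2)
proof (cases rule: copy_graph_edgeE)
  case (copy e)
  then have "a \<in> cv ` verts S"
    using assms(3) ends_copy_graph_ce wf_graph_ends_subset[OF wf_S] by blast
  then show ?thesis using assms(1) cv_notin_A by blast
next
  case (pendant a')
  have "cv a' \<noteq> a" using cv_ne_A pendant(1) A_verts assms(1) by blast
  then have "a = a'" using assms(3) ends_copy_graph_pe[OF pendant(1)] pendant(2) by auto
  then show ?thesis using pendant(2) by simp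
qed

lemma wf_copy_graph: "wf_graph copy_graph"
  unfolding wf_graph_def
proof (intro conjI ballI)
  show "finite (verts copy_graph)" "finite (edges copy_graph)"
    using wf_S A_verts finite_subset unfolding verts_copy_graph edges_copy_graph wf_graph_def by auto
  fix x assume "x \<in> edges copy_graph"
  then show "\<exists>u v. u \<noteq> v \<and> u \<in> verts copy_graph \<and> v \<in> verts copy_graph \<and> ends copy_graph x = {u, v}"
  proof (cases rule: copy_graph_edgeE)
    case (copy e)
    obtain p q where pq: "p \<noteq> q" "p \<in> verts S" "q \<in> verts S" "ends S e = {p, q}"
      using wf_S copy(1) unfolding wf_graph_def by blast
    have "cv p \<noteq> cv q" using pq inj_cv unfolding inj_on_def by auto
    then show ?thesis using pq ends_copy_graph_ce[OF copy(1)] copy(2) unfolding verts_copy_graph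
      by (intro exI[of _ "cv p"] exI[of _ "cv q"]) auto
  next
    case (pendant a)
    then show ?thesis using ends_copy_graph_pe[OF pendant(1)] cv_ne_A A_verts unfolding verts_copy_graph
      by (intro exI[of _ a] exI[of _ "cv a"]) auto
  qed
qed

lemma adj_copy_graph_proj:
  assumes "edges R \<subseteq> edges copy_graph" "\<And>f. f \<in> edges R \<Longrightarrow> ends R f = ends copy_graph f"
    and "adj R x y"
  shows "proj x = proj y \<or> adj (S\<lparr>edges := {e\<in>edges S. ce e \<in> edges R}\<rparr>) (proj x) (proj y)"
proof -
  obtain f where f: "f \<in> edges R" "ends copy_graph f = {x, y}"
    using assms unfolding adj_def by metis
  from assms(1) f(1) have "f \<in> edges copy_graph" by blast
  then show ?thesis
  proof (cases rule: copy_graph_edgeE)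
    case (copy e)
    then show ?thesis
      using ends_copy_graph_ce_proj[OF copy(1)] f unfolding adj_def by auto
  next
    case (pendant a)
    then have "{x, y} = {a, cv a}" using f(2) ends_copy_graph_pe by simp
    then show ?thesis using proj_A proj_cv pendant(1) A_verts by (auto simp: doubleton_eq_iff)
  qed
qed

lemma connected_copy_graph:
  assumes "connected_graph S"
  shows "connected_graph copy_graph"
proof (cases "verts S = {}")
  case True
  then show ?thesis using A_verts unfolding connected_graph_def verts_copy_graph by auto
next
  case False
  then obtain v0 where v0: "v0 \<in> verts S" by blast
  have adj_cv: "adj copy_graph (cv p) (cv q)" if pq: "adj S p q" for p q
  proof -
    obtain e where "e \<in> edges S" "ends S e = {p, q}" using pq unfolding adj_def by blast
    then show ?thesis
      unfolding adj_def edges_copy_graph using ends_copy_graph_ce by (intro bexI[of _ "ce e"]) auto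
  qed
  have reach_cv: "(adj copy_graph)\<^sup>*\<^sup>* (cv v0) (cv v)" if "v \<in> verts S" for v
    using adj_rtranclp_map[of S cv copy_graph] adj_cv connected_graph_rtranclp[OF assms v0 that] by blast
  show ?thesis
  proof (rule connected_graph_from_root)
    fix x assume "x \<in> verts copy_graph"
    then consider v where "v \<in> verts S" "x = cv v" | "x \<in> A" unfolding verts_copy_graph by blast
    then show "(adj copy_graph)\<^sup>*\<^sup>* (cv v0) x"
    proof cases
      case 2
      have "adj copy_graph (cv x) x"
        unfolding adj_def edges_copy_graph using ends_copy_graph_pe[OF 2]
        by (intro bexI[of _ "pe x"]) (auto simp: insert_commute 2)
      then show ?thesis using reach_cv 2 A_verts by (meson rtranclp.rtrancl_into_rtrancl subsetD)
    qed (use reach_cv in simp)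
  qed
qed

lemma acyclic_copy_graph:
  assumes "acyclic_graph S"
  shows "acyclic_graph copy_graph"
  unfolding acyclic_graph_def
proof (intro ballI allI impI notI)
  fix x u v assume x: "x \<in> edges copy_graph" and uv: "ends copy_graph x = {u, v}"
    and cycle: "(adj (delete_edge copy_graph x))\<^sup>*\<^sup>* u v"
  from x show False
  proof (cases rule: copy_graph_edgeE)
    case (pendant a)
    have "u \<noteq> v" using wf_graph_ends_doubleton[OF wf_copy_graph x] uv by (auto simp: doubleton_eq_iff)
    moreover have "w = a" if "(adj (delete_edge copy_graph x))\<^sup>*\<^sup>* a w" for w
      using adj_rtranclp_isolated[OF that] edge_at_A[OF pendant(1)] pendant(2)
      unfolding delete_edge_def by auto
    moreover have "u = a \<or> v = a" using uv ends_copy_graph_pe[OF pendant(1)] pendant(2) by auto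
    ultimately show False using cycle adj_rtranclp_sym by metis
  next
    case (copy e)
    have "{f \<in> edges S. ce f \<in> edges (delete_edge copy_graph x)} = edges S - {e}"
      using copy inj_ce unfolding delete_edge_def edges_copy_graph inj_on_def by auto
    then have "(adj (delete_edge S e))\<^sup>*\<^sup>* (proj u) (proj v)"
      using adj_rtranclp_map[OF adj_copy_graph_proj cycle, of "delete_edge copy_graph x"]
      unfolding delete_edge_def by auto
    then show False
      using assms copy ends_copy_graph_ce_proj[OF copy(1)] uv unfolding acyclic_graph_def by auto
  qed
qed

lemma degree_copy_graph_A: "a \<in> A \<Longrightarrow> degree copy_graph a = 1"
proof -
  assume a: "a \<in> A"
  have "{x \<in> edges copy_graph. a \<in> ends copy_graph x} = {pe a}"
    using edge_at_A[OF a] ends_copy_graph_pe[OF a] a unfolding edges_copy_graph by auto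
  then show ?thesis unfolding degree_def by simp
qed

lemma degree_copy_graph_cv:
  assumes v: "v \<in> verts S"
  shows "degree copy_graph (cv v) = degree S v + (if v \<in> A then 1 else 0)"
proof -
  let ?E = "{e \<in> edges S. v \<in> ends S e}"
  have copy_iff: "cv v \<in> ends copy_graph (ce e) \<longleftrightarrow> v \<in> ends S e" if "e \<in> edges S" for e
    using ends_copy_graph_ce[OF that] inj_on_image_mem_iff[OF inj_cv v wf_graph_ends_subset[OF wf_S that]]
    by simp
  have pendant_iff: "cv v \<in> ends copy_graph (pe a) \<longleftrightarrow> a = v" if "a \<in> A" for a
  proof -
    have "a \<in> verts S" using that A_verts by blast
    then show ?thesis
      using ends_copy_graph_pe[OF that] cv_ne_A[OF v that] inj_on_eq_iff[OF inj_cv v] by auto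
  qed
  have "{x \<in> ce ` edges S. cv v \<in> ends copy_graph x} = ce ` ?E" using copy_iff by blast
  moreover have "{x \<in> pe ` A. cv v \<in> ends copy_graph x} = (if v \<in> A then {pe v} else {})"
    using pendant_iff by auto
  ultimately have eq: "{x \<in> edges copy_graph. cv v \<in> ends copy_graph x} =
      ce ` ?E \<union> (if v \<in> A then {pe v} else {})"
    unfolding edges_copy_graph by blast
  have "finite ?E" using wf_S unfolding wf_graph_def by auto
  moreover have "ce ` ?E \<inter> (if v \<in> A then {pe v} else {}) = {}" using ce_pe_disjoint by auto
  moreover have "card (ce ` ?E) = degree S v"
    unfolding degree_def by (rule card_image) (rule inj_on_subset[OF inj_ce], auto)
  ultimately show ?thesis unfolding degree_def eq by (simp add: card_Un_disjoint)
qed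

lemma leaves_copy_graph:
  assumes "\<And>v. v \<in> verts S \<Longrightarrow> degree S v \<noteq> 0" "\<And>v. v \<in> verts S \<Longrightarrow> v \<notin> A \<Longrightarrow> degree S v \<noteq> 1"
  shows "leaves copy_graph = A"
proof -
  have "degree copy_graph (cv v) \<noteq> 1" if "v \<in> verts S" for v
    using degree_copy_graph_cv[OF that] assms[OF that] by (cases "v \<in> A") auto
  then show ?thesis unfolding leaves_def verts_copy_graph using degree_copy_graph_A by auto
qed

lemma glen_copy_graph: "glen l copy_graph = glen (l \<circ> ce) S + (\<Sum>a\<in>A. l (pe a))"
proof -
  have fin: "finite (edges S)" "finite A" using wf_S A_verts finite_subset unfolding wf_graph_def by auto
  have "glen l copy_graph = sum l (ce ` edges S) + sum l (pe ` A)"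
    unfolding glen_def edges_copy_graph using sum.union_disjoint[OF _ _ ce_pe_disjoint] fin by auto
  then show ?thesis
    unfolding glen_def using sum.reindex[OF inj_ce, of l] sum.reindex[OF inj_pe, of l] by (simp add: comp_def)
qed

lemma sd_copy_graph_ge:
  assumes nonneg: "\<And>x. x \<in> edges copy_graph \<Longrightarrow> 0 \<le> l x" and B: "B \<subseteq> A"
  shows "sd S (l \<circ> ce) B \<le> sd copy_graph l B"
proof (rule sd_greatest)
  fix R assume subR: "subgraph R copy_graph" and conR: "connected_graph R" and BR: "B \<subseteq> verts R"
  note R = subgraphD[OF subR]
  define R' where "R' = S\<lparr>verts := proj ` verts R, edges := {e\<in>edges S. ce e \<in> edges R}\<rparr>"
  have proj_ends: "ends S e \<subseteq> proj ` verts R" if "e \<in> edges S" "ce e \<in> edges R" for e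
  proof -
    have "cv ` ends S e \<subseteq> verts R"
      using that wf_graph_ends_subset[OF R(1)] R(4) ends_copy_graph_ce by metis
    then show ?thesis using proj_cv wf_graph_ends_subset[OF wf_S that(1)] by force
  qed
  have "subgraph R' S"
    unfolding R'_def
  proof (rule subgraph_restrict[OF wf_S])
    show "proj ` verts R \<subseteq> verts S" using R(2) proj_verts by blast
  qed (use proj_ends in auto)
  moreover have "connected_graph R'"
    unfolding connected_graph_def
  proof (intro ballI)
    fix u v assume "u \<in> verts R'" "v \<in> verts R'"
    then obtain u0 v0 where "u0 \<in> verts R" "v0 \<in> verts R" "u = proj u0" "v = proj v0"
      unfolding R'_def by auto
    moreover have "adj R' (proj x) (proj y)" if "adj R x y" "proj x \<noteq> proj y" for x y
      using adj_copy_graph_proj[OF R(3,4) that(1)] that(2) unfolding R'_def adj_def by auto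
    ultimately show "(adj R')\<^sup>*\<^sup>* u v"
      using adj_rtranclp_map[of R proj R'] connected_graph_rtranclp[OF conR] by blast
  qed
  moreover have "B \<subseteq> verts R'" using BR B proj_A unfolding R'_def by force
  moreover have "glen (l \<circ> ce) R' \<le> glen l R"
  proof -
    have "glen (l \<circ> ce) R' = sum l (ce ` edges R')"
      unfolding glen_def R'_def using sum.reindex[OF inj_on_subset[OF inj_ce], of _ l] by simp
    also have "\<dots> \<le> glen l R"
      unfolding glen_def using R(1,3) nonneg unfolding R'_def wf_graph_def
      by (intro sum_mono2) auto
    finally show ?thesis .
  qed
  ultimately show "sd S (l \<circ> ce) B \<le> ereal (glen l R)"
    by (meson sd_le_glen ereal_less_eq(3) order_trans)
qed


lemma pendant_length:
  assumes "ce ` edges S \<inter> E = {}" "pe ` A \<inter> E = {}"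
  obtains l' where "\<And>e. e \<in> edges S \<Longrightarrow> l' (ce e) = l e" "\<And>a. a \<in> A \<Longrightarrow> l' (pe a) = \<epsilon>"
    "\<And>x. x \<in> E \<Longrightarrow> l' x = l x"
proof -
  define l' where "l' x = (if x \<in> ce ` edges S then l (the_inv_into (edges S) ce x)
      else if x \<in> pe ` A then \<epsilon> else l x)" for x
  show ?thesis
  proof (rule that)
    show "l' (ce e) = l e" if "e \<in> edges S" for e
      unfolding l'_def using the_inv_into_f_f[OF inj_ce that] that by auto
    show "l' (pe a) = \<epsilon>" if "a \<in> A" for a unfolding l'_def using ce_pe_disjoint that by auto
    show "l' x = l x" if "x \<in> E" for x unfolding l'_def using assms that by auto
  qed
qed

text \<open>(SCT3) holds because the pendant edges are short, (SCT4) because every subtree of the copy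
  projects onto a connected subgraph of \<open>S \<subseteq> G\<close> that is no longer.\<close>
lemma shortcut_tree_copy_graph:
  assumes subS: "subgraph S G" and subH: "subgraph H G" and lf: "length_fun G l"
    and fresh: "cv ` verts S \<inter> verts G = {}" "ce ` edges S \<inter> edges G = {}" "pe ` A \<inter> edges G = {}"
    and conS: "connected_graph S" and acyclic: "acyclic_graph S" and leaves: "leaves copy_graph = A"
    and AH: "A \<subseteq> verts H" and A: "A \<noteq> {}"
    and \<epsilon>: "0 < \<epsilon>" "ereal (glen l S + real (card A) * \<epsilon>) < sd H l A"
    and geo: "\<And>B. B \<subset> A \<Longrightarrow> sd H l B \<le> sd G l B"
  obtains l' where "shortcut_tree copy_graph H l'"
proof -
  have wfH: "wf_graph H" and VHG: "verts H \<subseteq> verts G" and EHG: "edges H \<subseteq> edges G"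
    using subgraphD[OF subH] by auto
  obtain l' where l'_ce: "\<And>e. e \<in> edges S \<Longrightarrow> l' (ce e) = l e"
    and l'_pe: "\<And>a. a \<in> A \<Longrightarrow> l' (pe a) = \<epsilon>" and l'_G: "\<And>x. x \<in> edges G \<Longrightarrow> l' x = l x"
    using pendant_length[OF fresh(2,3), of l \<epsilon>] by blast
  have lpos: "0 < l x" if "x \<in> edges G" for x using lf that unfolding length_fun_def by blast
  have l'_copy_pos: "0 < l' x" if "x \<in> edges copy_graph" for x
    using that lpos subgraphD(3)[OF subS] l'_ce l'_pe \<epsilon>(1) by (cases rule: copy_graph_edgeE) auto
  have sdH: "sd H l' B = sd H l B" for B using l'_G EHG by (intro sd_cong) auto
  have sdS: "sd S (l' \<circ> ce) B = sd S l B" for B using l'_ce by (intro sd_cong) auto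
  have "shortcut_tree copy_graph H l'"
    unfolding shortcut_tree_def is_tree_def
  proof (intro conjI allI impI)
    show "wf_graph copy_graph" "connected_graph copy_graph" "acyclic_graph copy_graph" "wf_graph H"
      using wf_copy_graph connected_copy_graph[OF conS] acyclic_copy_graph[OF acyclic] wfH by auto
    show "verts copy_graph \<noteq> {}" using A unfolding verts_copy_graph by auto
    show "length_fun (graph_union copy_graph H) l'"
      using l'_copy_pos l'_G lpos EHG unfolding length_fun_def by auto
    show "verts copy_graph \<inter> verts H = leaves copy_graph"
      using fresh(1) VHG AH unfolding leaves verts_copy_graph by auto
    show "edges copy_graph \<inter> edges H = {}"
      using fresh(2,3) EHG unfolding edges_copy_graph by auto
    have "glen l' copy_graph = glen l S + real (card A) * \<epsilon>"
      unfolding glen_copy_graph using l'_ce l'_pe by (simp add: glen_def)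
    then show "ereal (glen l' copy_graph) < sd H l' (leaves copy_graph)"
      using \<epsilon>(2) unfolding sdH leaves by simp
    fix B assume "B \<subset> leaves copy_graph"
    then have B: "B \<subset> A" unfolding leaves .
    have "sd H l' B \<le> sd G l B" unfolding sdH using geo[OF B] .
    also have "\<dots> \<le> sd S l B" by (rule sd_subgraph_le[OF subS])
    also have "\<dots> \<le> sd copy_graph l' B"
      using sd_copy_graph_ge[of l' B] l'_copy_pos B unfolding sdS by (auto intro: less_imp_le)
    finally show "sd H l' B \<le> sd copy_graph l' B" .
  qed
  then show ?thesis using that by blast
qed
end

section \<open>Shortcut trees from non-geodesic sets\<close>

lemma inj_on_avoiding:
  assumes "finite X" "finite Y" "infinite (UNIV :: 'b set)"
  obtains f :: "'a \<Rightarrow> 'b" where "inj_on f X" "f ` X \<inter> Y = {}"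
proof -
  have "infinite (UNIV - Y)" using assms(2,3) by (simp add: Diff_infinite_finite)
  then obtain Z where Z: "finite Z" "card Z = card X" "Z \<subseteq> UNIV - Y"
    using infinite_arbitrarily_large by blast
  then obtain f where "bij_betw f X Z" using finite_same_card_bij[OF assms(1) Z(1)] by metis
  then show ?thesis using that Z(3) unfolding bij_betw_def by blast
qed

lemma pendant_copy_avoiding:
  fixes S G :: "('v, 'e) mgraph"
  assumes wfS: "wf_graph S" and AS: "A \<subseteq> verts S" and AG: "A \<subseteq> verts G" and wfG: "wf_graph G"
    and infV: "infinite (UNIV :: 'v set)" and infE: "infinite (UNIV :: 'e set)"
  obtains cv ce pe where "pendant_copy S A cv ce pe"
    "cv ` verts S \<inter> verts G = {}" "ce ` edges S \<inter> edges G = {}" "pe ` A \<inter> edges G = {}"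
proof -
  have fin: "finite (verts S)" "finite (edges S)" "finite A" "finite (verts G)" "finite (edges G)"
    using wfS wfG AS finite_subset unfolding wf_graph_def by auto
  obtain cv :: "'v \<Rightarrow> 'v" where cv: "inj_on cv (verts S)" "cv ` verts S \<inter> verts G = {}"
    using inj_on_avoiding[OF fin(1,4) infV] by blast
  have "finite (edges S <+> A)" using fin by simp
  then obtain g :: "'e + 'v \<Rightarrow> 'e" where g: "inj_on g (edges S <+> A)" "g ` (edges S <+> A) \<inter> edges G = {}"
    using inj_on_avoiding[OF _ fin(5) infE] by blast
  have "pendant_copy S A cv (g \<circ> Inl) (g \<circ> Inr)"
    using wfS AS cv AG g(1) unfolding pendant_copy_def inj_on_def by (auto 0 3)
  moreover have "(g \<circ> Inl) ` edges S \<inter> edges G = {}" "(g \<circ> Inr) ` A \<inter> edges G = {}"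
    using g(2) by auto
  ultimately show ?thesis using that cv(2) by blast
qed

lemma ereal_add_small:
  assumes "ereal x < D" "0 \<le> c"
  obtains \<epsilon> where "0 < \<epsilon>" "ereal (x + c * \<epsilon>) < D"
proof (cases D)
  case (real d)
  define \<epsilon> where "\<epsilon> = (d - x) / (2 * (c + 1))"
  have "x < d" using assms(1) real by simp
  then have pos: "0 < \<epsilon>" unfolding \<epsilon>_def using assms(2) by simp
  have "c * \<epsilon> \<le> (c + 1) * \<epsilon>" using pos by simp
  also have "\<dots> = (d - x) / 2" unfolding \<epsilon>_def using assms(2) by (simp add: field_simps)
  also have "\<dots> < d - x" using \<open>x < d\<close> by simp
  finally show ?thesis using that pos real by simp
next
  case PInf
  then show ?thesis using that[of 1] by simp
next
  case MInf
  then show ?thesis using assms(1) by simp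
qed

lemma sd_gap_shortcut_tree:
  fixes G H :: "('v, 'e) mgraph"
  assumes wfG: "wf_graph G" and subH: "subgraph H G" and lf: "length_fun G l"
    and AH: "A \<subseteq> verts H" and cardA: "2 \<le> card A"
    and gap: "sd G l A < sd H l A"
    and geo: "\<And>B. B \<subset> A \<Longrightarrow> sd H l B \<le> sd G l B"
    and infV: "infinite (UNIV :: 'v set)" and infE: "infinite (UNIV :: 'e set)"
  obtains T l' where "shortcut_tree T H l'" "leaves T = A"
proof -
  have "sd G l A \<noteq> \<infinity>" using gap by auto
  then obtain S where subS: "subgraph S G" and conS: "connected_graph S" and AS: "A \<subseteq> verts S"
    and opt: "sd G l A = ereal (glen l S)"
    using sd_attained[OF wfG] by blast
  have wfS: "wf_graph S" using subgraphD(1)[OF subS] .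
  have deg_pos: "degree S v \<noteq> 0" if v: "v \<in> verts S" for v
  proof -
    obtain w where "w \<in> A" "w \<noteq> v" using cardA card_mono[of "{v}" A] by force
    then show ?thesis using degree_pos[OF conS _ v] AS wfS unfolding wf_graph_def by blast
  qed
  obtain cv ce pe where pc: "pendant_copy S A cv ce pe"
    and fresh: "cv ` verts S \<inter> verts G = {}" "ce ` edges S \<inter> edges G = {}" "pe ` A \<inter> edges G = {}"
    using pendant_copy_avoiding[OF wfS AS _ wfG infV infE] AH subgraphD(2)[OF subH] by blast
  interpret pendant_copy S A cv ce pe by (rule pc)
  have leaves: "leaves copy_graph = A"
    using leaves_copy_graph deg_pos sd_optimal_leaves[OF opt lf subS conS AS] by blast
  have "A \<noteq> {}" using cardA by auto
  obtain \<epsilon> where \<epsilon>: "0 < \<epsilon>" "ereal (glen l S + real (card A) * \<epsilon>) < sd H l A"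
    using ereal_add_small[of "glen l S" "sd H l A" "real (card A)"] gap opt by auto
  obtain l' where "shortcut_tree copy_graph H l'"
    using shortcut_tree_copy_graph[OF subS subH lf fresh conS sd_optimal_acyclic[OF opt lf subS conS AS]
        leaves AH \<open>A \<noteq> {}\<close> \<epsilon> geo] by blast
  then show ?thesis using that leaves by blast
qed

lemma in_Hk_if_shortcut_trees_small:
  fixes H :: "('v, 'e) mgraph"
  assumes k2: "2 \<le> k" and wfH: "wf_graph H"
    and infV: "infinite (UNIV :: 'v set)" and infE: "infinite (UNIV :: 'e set)"
    and small: "\<forall>(T :: ('v, 'e) mgraph) (l :: 'e \<Rightarrow> real). shortcut_tree T H l \<longrightarrow> card (leaves T) \<le> k"
  shows "in_Hk k H"
  unfolding in_Hk_def
proof (intro allI impI)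
  fix G :: "('v, 'e) mgraph" and l :: "'e \<Rightarrow> real"
  assume "wf_graph G \<and> subgraph H G \<and> length_fun G l \<and> k_geodesic k H G l"
  then have wfG: "wf_graph G" and subH: "subgraph H G" and lf: "length_fun G l"
    and kgeo: "k_geodesic k H G l" by auto
  show "fully_geodesic H G l"
  proof (rule ccontr)
    let ?bad = "\<lambda>A. A \<subseteq> verts H \<and> sd H l A \<noteq> sd G l A"
    assume "\<not> fully_geodesic H G l"
    then obtain A0 where "?bad A0" unfolding fully_geodesic_def by auto
    then obtain A where A: "?bad A" and least: "\<And>B. ?bad B \<Longrightarrow> card A \<le> card B"
      using ex_has_least_nat[of ?bad A0 card] by metis
    have finA: "finite A" using A wfH finite_subset unfolding wf_graph_def by auto
    have kA: "k < card A" using A kgeo unfolding k_geodesic_def by (meson not_le)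
    have gap: "sd G l A < sd H l A" using A sd_subgraph_le[OF subH, of l A] by auto
    have geo: "sd H l B \<le> sd G l B" if B: "B \<subset> A" for B
      using least[of B] psubset_card_mono[OF finA B] B A by fastforce
    obtain T l' where "shortcut_tree T H l'" "leaves T = A"
      using sd_gap_shortcut_tree[OF wfG subH lf _ _ gap geo infV infE] A k2 kA by auto
    then show False using small kA by fastforce
  qed
qed

theorem proposition6p2:
  fixes k :: nat and H :: "('v, 'e) mgraph"
  assumes "k \<ge> 2"
    and "wf_graph H"
    and "infinite (UNIV :: 'v set)" and "infinite (UNIV :: 'e set)"
  shows "in_Hk k H \<longleftrightarrow>
    (\<forall>(T :: ('v, 'e) mgraph) (l :: 'e \<Rightarrow> real). shortcut_tree T H l \<longrightarrow> card (leaves T) \<le> k)"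
  using shortcut_tree_card_leaves_le in_Hk_if_shortcut_trees_small[OF assms] by blast

end
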